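(* Let $P\subseteq S_n$ be a permutation array with ${\rm hd}(P)=d$ and $|P^{\sf CT}|\ge 2$. Then ${\rm hd}(P^{\sf CT})>{\rm hd}(P)$ if and only if both of the following hold: (1) any $\sigma,\tau\in P$ with ${\rm hd}(\sigma,\tau)=d$ satisfy $\sigma^{\sf CT}=\tau^{\sf CT}$; and (2) any $\sigma,\tau\in P$ with ${\rm hd}(\sigma,\tau)>d$ satisfy ${\rm hd}(\sigma^{\sf CT},\tau^{\sf CT})>d$ or $\sigma^{\sf CT}=\tau^{\sf CT}$.
   Context: $S_n$ is the symmetric group on $\{0,1,\ldots,n-1\}$. A permutation array is a non-empty subset $P\subseteq S_n$. ${\rm hd}(\sigma,\tau)=|\{x:\sigma(x)\neq\tau(x)\}|$ and ${\rm hd}(P)=\min\{{\rm hd}(\sigma,\tau):\sigma,\tau\in P,\ \sigma\neq\tau\}$. The contraction of $\sigma\in S_n$ is $\sigma^{\sf CT}\in S_{n-1}$ (on $\{0,\ldots,n-2\}$) defined by $\sigma^{\sf CT}(x)=\sigma(n-1)$ if $x=\sigma^{-1}(n-1)$ and $\sigma^{\sf CT}(x)=\sigma(x)$ otherwise (i.e. delete $n-1$ from the cycle notation of $\sigma$); $P^{\sf CT}=\{\sigma^{\sf CT}:\sigma\in P\}$. *)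

theory Defs
  imports "HOL-Combinatorics.Permutations"
begin

definition Sym :: "nat \<Rightarrow> (nat \<Rightarrow> nat) set" where
  "Sym n = {p. p permutes {..<n}}"

definition hdist :: "nat \<Rightarrow> (nat \<Rightarrow> nat) \<Rightarrow> (nat \<Rightarrow> nat) \<Rightarrow> nat" where
  "hdist n s t = card {x \<in> {..<n}. s x \<noteq> t x}"

definition hd_arr :: "nat \<Rightarrow> (nat \<Rightarrow> nat) set \<Rightarrow> nat" where
  "hd_arr n P = Min {hdist n s t | s t. s \<in> P \<and> t \<in> P \<and> s \<noteq> t}"

text \<open>Contraction of s in S_n to S_(n-1): delete n-1 from the cycle notation.\<close>
definition contr :: "nat \<Rightarrow> (nat \<Rightarrow> nat) \<Rightarrow> (nat \<Rightarrow> nat)" where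
  "contr n s = (\<lambda>x. if x < n - 1 then (if s x = n - 1 then s (n - 1) else s x) else x)"

definition contr_arr :: "nat \<Rightarrow> (nat \<Rightarrow> nat) set \<Rightarrow> (nat \<Rightarrow> nat) set" where
  "contr_arr n P = contr n ` P"

end

theory Submission
  imports Defs
begin

text \<open>Contraction never increases the Hamming distance: a position x < n - 1 where the
  contractions differ but the permutations agree must satisfy s x = t x = n - 1, so by
  injectivity there is at most one such x, and for it the lost position n - 1 was counted
  before.  Hence if the contracted array has larger minimum distance, no pair at distance d
  may stay distinct after contraction and no pair further apart may drop to distance \<le> d.
  Conversely, a pair realising the minimum distance of the contracted array comes from a
  distinct pair at distance \<ge> d, and the two conditions push its contracted distance above d.\<close>

lemma hdist_le: "hdist n s t \<le> n"
  unfolding hdist_def using card_mono[of "{..<n}" "{x \<in> {..<n}. s x \<noteq> t x}"] by auto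

lemma finite_hdist_values: "finite {hdist n s t | s t. s \<in> P \<and> t \<in> P \<and> s \<noteq> t}"
  by (rule finite_subset[of _ "{..n}"]) (auto simp: hdist_le)

lemma hd_arr_le_hdist:
  assumes "s \<in> P" "t \<in> P" "s \<noteq> t"
  shows "hd_arr n P \<le> hdist n s t"
  unfolding hd_arr_def using assms by (intro Min_le[OF finite_hdist_values]) blast

lemma hd_arr_attained:
  assumes "s \<in> P" "t \<in> P" "s \<noteq> t"
  obtains s' t' where "s' \<in> P" "t' \<in> P" "s' \<noteq> t'" "hd_arr n P = hdist n s' t'"
proof -
  have "hd_arr n P \<in> {hdist n s t | s t. s \<in> P \<and> t \<in> P \<and> s \<noteq> t}"
    unfolding hd_arr_def using assms by (intro Min_in[OF finite_hdist_values]) blast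
  then show ?thesis using that by blast
qed

lemma hdist_contr_le:
  assumes inj: "inj_on s {..<n}"
  shows "hdist (n - 1) (contr n s) (contr n t) \<le> hdist n s t"
proof -
  define D where "D = {x \<in> {..<n}. s x \<noteq> t x}"
  define D' where "D' = {x \<in> {..<n - 1}. contr n s x \<noteq> contr n t x}"
  have "finite D" unfolding D_def by simp
  show ?thesis
  proof (cases "\<exists>x0 < n - 1. contr n s x0 \<noteq> contr n t x0 \<and> s x0 = t x0")
    case False
    then have "D' \<subseteq> D" unfolding D'_def D_def by auto
    with \<open>finite D\<close> show ?thesis unfolding hdist_def D_def[symmetric] D'_def[symmetric]
      by (simp add: card_mono)
  next
    case True
    then obtain x0 where x0: "x0 < n - 1" "contr n s x0 \<noteq> contr n t x0" "s x0 = t x0" by blast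
    then have sx0: "s x0 = n - 1" and "s (n - 1) \<noteq> t (n - 1)"
      unfolding contr_def by (auto split: if_splits)
    with x0 have last_in_D: "n - 1 \<in> D" unfolding D_def by auto
    have "D' \<subseteq> insert x0 (D - {n - 1})"
    proof
      fix x assume x: "x \<in> D'"
      show "x \<in> insert x0 (D - {n - 1})"
      proof (cases "s x = t x")
        case True
        with x have "s x = s x0" unfolding D'_def contr_def sx0 by (auto split: if_splits)
        with inj x x0(1) have "x = x0" unfolding D'_def by (auto dest: inj_onD)
        then show ?thesis by simp
      next
        case False
        with x show ?thesis unfolding D'_def D_def by auto
      qed
    qed
    then have "card D' \<le> card (insert x0 (D - {n - 1}))"
      using \<open>finite D\<close> by (intro card_mono) auto
    also have "\<dots> \<le> Suc (card (D - {n - 1}))" by (simp add: card_insert_le_m1)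
    also have "\<dots> = card D" using last_in_D \<open>finite D\<close> by (metis card_Suc_Diff1)
    finally show ?thesis unfolding hdist_def D_def[symmetric] D'_def[symmetric] .
  qed
qed

lemma hd_arr_contr_le:
  assumes "s \<in> P" "t \<in> P" "contr n s \<noteq> contr n t"
  shows "hd_arr (n - 1) (contr_arr n P) \<le> hdist (n - 1) (contr n s) (contr n t)"
  using assms unfolding contr_arr_def by (intro hd_arr_le_hdist) auto

lemma hd_arr_contr_attained:
  assumes "card (contr_arr n P) \<ge> 2"
  obtains s t where "s \<in> P" "t \<in> P" "contr n s \<noteq> contr n t"
    "hd_arr (n - 1) (contr_arr n P) = hdist (n - 1) (contr n s) (contr n t)"
proof -
  have "finite (contr_arr n P)" using assms by (metis card.infinite not_numeral_le_zero)
  with assms obtain a b where "a \<in> contr_arr n P" "b \<in> contr_arr n P" "a \<noteq> b"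
    using card_le_Suc0_iff_eq by (metis One_nat_def not_less_eq_eq numeral_2_eq_2)
  then obtain a' b' where "a' \<in> contr_arr n P" "b' \<in> contr_arr n P" "a' \<noteq> b'"
      "hd_arr (n - 1) (contr_arr n P) = hdist (n - 1) a' b'"
    by (rule hd_arr_attained)
  then show ?thesis using that unfolding contr_arr_def by blast
qed

theorem theorem3p3:
  fixes n d :: nat and P :: "(nat \<Rightarrow> nat) set"
  assumes "P \<noteq> {}" and "P \<subseteq> Sym n"
    and "hd_arr n P = d"
    and "card (contr_arr n P) \<ge> 2"
  shows "hd_arr (n - 1) (contr_arr n P) > hd_arr n P \<longleftrightarrow>
         ((\<forall>s\<in>P. \<forall>t\<in>P. hdist n s t = d \<longrightarrow> contr n s = contr n t) \<and>
          (\<forall>s\<in>P. \<forall>t\<in>P. hdist n s t > d \<longrightarrow>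
              hdist (n - 1) (contr n s) (contr n t) > d \<or> contr n s = contr n t))"
  (is "?gt \<longleftrightarrow> ?conds")
proof
  assume ?gt
  have "contr n s = contr n t" if "s \<in> P" "t \<in> P" "hdist n s t = d" for s t
  proof (rule ccontr)
    assume "contr n s \<noteq> contr n t"
    moreover have "inj_on s {..<n}"
      using \<open>s \<in> P\<close> \<open>P \<subseteq> Sym n\<close> unfolding Sym_def by (auto intro: permutes_inj_on)
    ultimately show False
      using hd_arr_contr_le[OF that(1,2)] hdist_contr_le[of s n t] \<open>?gt\<close> that(3) assms(3) by force
  qed
  then show ?conds using hd_arr_contr_le \<open>?gt\<close> assms(3) by force
next
  assume ?conds
  obtain s t where st: "s \<in> P" "t \<in> P" "contr n s \<noteq> contr n t"
      and hd': "hd_arr (n - 1) (contr_arr n P) = hdist (n - 1) (contr n s) (contr n t)"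
    using hd_arr_contr_attained[OF assms(4)] .
  have "d \<le> hdist n s t" using hd_arr_le_hdist[of s P t n] st assms(3) by force
  with \<open>?conds\<close> st have "hdist n s t > d" by fastforce
  with \<open>?conds\<close> st hd' assms(3) show ?gt by force
qed

end
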